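(* Let $p$ be a prime, let $(R,u)$ be a $\mathbb{Z}_p$-algebra with a filtration $u:R\to\mathbb{Z}\cup\{\infty\}$, and let $\sigma$ be an automorphism of $R$ such that the skew derivation $(\sigma,\sigma-\mathrm{id})$ is compatible with $u$. Suppose $u(p)\geq1$ and $\deg_u(\sigma-\mathrm{id})\geq1$. Then $\deg_u(\sigma^{p^n}-\mathrm{id})\geq n$ for all $n\in\mathbb{N}$.
   Context: A filtration $u$ satisfies $u(0)=\infty$, $u(x+y)\geq\min\{u(x),u(y)\}$, $u(xy)\geq u(x)+u(y)$, and is separated ($u(x)=\infty\iff x=0$). For an additive map $d:R\to R$, $\deg_u(d)=\inf_{x\neq0}\{u(d(x))-u(x)\}$. A skew derivation $(\sigma,\delta)$ ($\sigma$ automorphism, $\delta(ab)=\delta(a)b+\sigma(a)\delta(b)$) is compatible with $u$ if $\deg_u(\sigma-\mathrm{id})>0$ and $\deg_u(\delta)>0$. *)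

theory Defs
  imports "HOL-Library.Extended_Real" "HOL-Computational_Algebra.Primes"
begin

definition filtration :: "('a::ring_1 \<Rightarrow> ereal) \<Rightarrow> bool" where
  "filtration u \<longleftrightarrow>
     (\<forall>x. u x = \<infinity> \<or> (\<exists>k::int. u x = ereal (of_int k))) \<and>
     u 0 = \<infinity> \<and>
     (\<forall>x y. u (x + y) \<ge> min (u x) (u y)) \<and>
     (\<forall>x y. u (x * y) \<ge> u x + u y) \<and>
     (\<forall>x. u x = \<infinity> \<longleftrightarrow> x = 0)"

definition deg_u :: "('a::ring_1 \<Rightarrow> ereal) \<Rightarrow> ('a \<Rightarrow> 'a) \<Rightarrow> ereal" where
  "deg_u u d = (INF x\<in>{x. x \<noteq> 0}. u (d x) - u x)"

definition ring_automorphism :: "('a::ring_1 \<Rightarrow> 'a) \<Rightarrow> bool" where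
  "ring_automorphism \<sigma> \<longleftrightarrow> bij \<sigma> \<and> (\<forall>x y. \<sigma> (x + y) = \<sigma> x + \<sigma> y) \<and>
     (\<forall>x y. \<sigma> (x * y) = \<sigma> x * \<sigma> y) \<and> \<sigma> 1 = 1"

definition skew_derivation :: "('a::ring_1 \<Rightarrow> 'a) \<Rightarrow> ('a \<Rightarrow> 'a) \<Rightarrow> bool" where
  "skew_derivation \<sigma> \<delta> \<longleftrightarrow> ring_automorphism \<sigma> \<and>
     (\<forall>x y. \<delta> (x + y) = \<delta> x + \<delta> y) \<and>
     (\<forall>a b. \<delta> (a * b) = \<delta> a * b + \<sigma> a * \<delta> b)"

definition compatible :: "('a::ring_1 \<Rightarrow> ereal) \<Rightarrow> ('a \<Rightarrow> 'a) \<Rightarrow> ('a \<Rightarrow> 'a) \<Rightarrow> bool" where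
  "compatible u \<sigma> \<delta> \<longleftrightarrow> skew_derivation \<sigma> \<delta> \<and>
     deg_u u (\<lambda>x. \<sigma> x - x) > 0 \<and> deg_u u \<delta> > 0"

end

theory Submission
  imports Defs
begin

text \<open>Put \<tau> = \<sigma>^(p^n) and \<delta> = \<tau> - id, and suppose \<delta> raises u by c \<ge> 1. Then so
  does every \<tau>^i - id, and the telescoping identity
  \<tau>^p - id = p \<delta> + \<Sum>(i < p) (\<tau>^i - id) \<delta>
  shows that \<tau>^p - id raises u by c + 1: the first term by u(p) + c, the others by 2c.
  Induction on n gives deg_u(\<sigma>^(p^n) - id) \<ge> n + 1.\<close>

definition raises :: "('a::ring_1 \<Rightarrow> ereal) \<Rightarrow> real \<Rightarrow> ('a \<Rightarrow> 'a) \<Rightarrow> bool" where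
  "raises u c f \<longleftrightarrow> (\<forall>x. ereal c + u x \<le> u (f x))"

lemma filtration_real:
  assumes "filtration u" "x \<noteq> 0"
  obtains r where "u x = ereal r"
  using assms unfolding filtration_def by metis

lemma filtration_add_ge:
  "filtration u \<Longrightarrow> b \<le> u x \<Longrightarrow> b \<le> u y \<Longrightarrow> b \<le> u (x + y)"
  unfolding filtration_def by (metis min.bounded_iff order_trans)

lemma filtration_sum_ge:
  assumes "filtration u" "\<And>i. i \<in> A \<Longrightarrow> b \<le> u (f i)"
  shows "b \<le> u (sum f A)"
  using assms(2)
proof (induction A rule: infinite_finite_induct)
  case (insert i A)
  then show ?case by (simp add: filtration_add_ge[OF assms(1)])
qed (use assms(1) in \<open>simp_all add: filtration_def\<close>)

lemma deg_u_ge_iff_raises: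
  assumes "filtration u" "f 0 = 0"
  shows "ereal c \<le> deg_u u f \<longleftrightarrow> raises u c f"
proof -
  have shift: "ereal c \<le> u (f x) - u x \<longleftrightarrow> ereal c + u x \<le> u (f x)" if "x \<noteq> 0" for x
  proof -
    obtain r where "u x = ereal r"
      using filtration_real[OF assms(1) \<open>x \<noteq> 0\<close>] by blast
    then show ?thesis
      by (cases "u (f x)") auto
  qed
  have at_zero: "ereal c + u 0 \<le> u (f 0)"
    using assms unfolding filtration_def by simp
  show ?thesis
    unfolding deg_u_def raises_def le_INF_iff
  proof (intro iffI allI ballI)
    fix x :: 'a
    assume "\<forall>x\<in>{x. x \<noteq> 0}. ereal c \<le> u (f x) - u x"
    then show "ereal c + u x \<le> u (f x)"
      using shift at_zero by (cases "x = 0") auto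
  next
    fix x :: 'a
    assume "\<forall>x. ereal c + u x \<le> u (f x)" and "x \<in> {x. x \<noteq> 0}"
    then show "ereal c \<le> u (f x) - u x"
      using shift by simp
  qed
qed

lemma raises_mono: "c' \<le> c \<Longrightarrow> raises u c f \<Longrightarrow> raises u c' f"
  unfolding raises_def by (meson add_right_mono ereal_less_eq(3) order_trans)

lemma raises_diff_imp_le:
  assumes "filtration u" "raises u 0 (\<lambda>x. t x - x)"
  shows "u x \<le> u (t x)"
proof -
  have "u x \<le> u (t x - x)"
    using assms(2) unfolding raises_def by (metis add_0 zero_ereal_def)
  then show ?thesis
    using filtration_add_ge[OF assms(1), of "u x" x "t x - x"] by simp
qed

lemma raises_funpow_diff:
  assumes "filtration u" "raises u c (\<lambda>x. t x - x)" "0 \<le> c"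
  shows "raises u c (\<lambda>x. (t ^^ i) x - x)"
  unfolding raises_def
proof (induction i)
  case 0
  show ?case using assms(1) unfolding filtration_def by simp
next
  case (Suc i)
  show ?case
  proof
    fix x
    have "ereal c + u x \<le> ereal c + u (t x)"
      using raises_diff_imp_le[OF assms(1) raises_mono[OF assms(3,2)]] by (simp add: add_left_mono)
    also have "\<dots> \<le> u ((t ^^ i) (t x) - t x)"
      using Suc.IH by blast
    finally have later: "ereal c + u x \<le> u ((t ^^ i) (t x) - t x)" .
    have first: "ereal c + u x \<le> u (t x - x)"
      using assms(2) unfolding raises_def by blast
    have "(t ^^ Suc i) x - x = ((t ^^ i) (t x) - t x) + (t x - x)"
      by (simp add: funpow_Suc_right del: funpow.simps)
    then show "ereal c + u x \<le> u ((t ^^ Suc i) x - x)"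
      using filtration_add_ge[OF assms(1) later first] by simp
  qed
qed

lemma additive_funpow:
  fixes t :: "'a::ab_group_add \<Rightarrow> 'a"
  shows "additive t \<Longrightarrow> additive (t ^^ m)"
  unfolding additive_def by (induction m) simp_all

lemma funpow_diff_id_expansion:
  assumes "additive t"
  shows "(t ^^ m) x - x = of_nat m * (t x - x) + (\<Sum>i<m. (t ^^ i) (t x - x) - (t x - x))"
proof (induction m)
  case 0
  then show ?case by simp
next
  case (Suc m)
  have "(t ^^ Suc m) x - x = ((t ^^ m) x - x) + (t ^^ m) (t x - x)"
    using additive.diff[OF additive_funpow[OF assms]] by (simp add: funpow_Suc_right del: funpow.simps)
  then show ?case
    unfolding Suc.IH by (simp add: algebra_simps)
qed

lemma raises_funpow_diff_add_one:
  assumes fu: "filtration u" and "additive t" and d: "raises u c (\<lambda>x. t x - x)"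
    and "1 \<le> c" and up: "1 \<le> u (of_nat p)"
  shows "raises u (c + 1) (\<lambda>x. (t ^^ p) x - x)"
  unfolding raises_def
proof
  fix x
  let ?d = "t x - x"
  have dx: "ereal c + u x \<le> u ?d"
    using d unfolding raises_def by blast
  have "ereal (c + 1) = 1 + ereal c"
    by (metis add.commute one_ereal_def plus_ereal.simps(1))
  then have "ereal (c + 1) + u x = 1 + (ereal c + u x)"
    by (simp only: add.assoc)
  also have "\<dots> \<le> u (of_nat p) + u ?d"
    by (rule add_mono[OF up dx])
  also have "\<dots> \<le> u (of_nat p * ?d)"
    using fu unfolding filtration_def by blast
  finally have first: "ereal (c + 1) + u x \<le> u (of_nat p * ?d)" .
  have rest: "ereal (c + 1) + u x \<le> u ((t ^^ i) ?d - ?d)" for i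
  proof -
    have "ereal (c + 1) + u x \<le> ereal c + (ereal c + u x)"
      using \<open>1 \<le> c\<close> by (cases "u x") simp_all
    also have "\<dots> \<le> ereal c + u ?d"
      by (rule add_left_mono[OF dx])
    also have "\<dots> \<le> u ((t ^^ i) ?d - ?d)"
      using raises_funpow_diff[OF fu d] \<open>1 \<le> c\<close> unfolding raises_def by simp
    finally show ?thesis .
  qed
  have "ereal (c + 1) + u x \<le> u (of_nat p * ?d + (\<Sum>i<p. (t ^^ i) ?d - ?d))"
    by (intro filtration_add_ge[OF fu first] filtration_sum_ge[OF fu] rest)
  then show "ereal (c + 1) + u x \<le> u ((t ^^ p) x - x)"
    by (simp only: funpow_diff_id_expansion[OF \<open>additive t\<close>, of p x])
qed

lemma raises_funpow_power_diff:
  assumes "filtration u" "additive t" "raises u 1 (\<lambda>x. t x - x)" "1 \<le> u (of_nat p)"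
  shows "raises u (real n + 1) (\<lambda>x. (t ^^ (p ^ n)) x - x)"
proof (induction n)
  case 0
  show ?case using assms(3) by simp
next
  case (Suc n)
  have "raises u (real n + 1 + 1) (\<lambda>x. ((t ^^ (p ^ n)) ^^ p) x - x)"
    by (rule raises_funpow_diff_add_one[OF assms(1) additive_funpow[OF assms(2)] Suc.IH _ assms(4)]) simp
  moreover have "(t ^^ (p ^ n)) ^^ p = t ^^ (p ^ Suc n)"
    by (simp only: funpow_mult power_Suc2)
  ultimately show ?case by simp
qed

theorem lemma1p2p5:
  fixes p :: nat and u :: "'a::ring_1 \<Rightarrow> ereal" and \<sigma> :: "'a \<Rightarrow> 'a"
  assumes "prime p"
    and "filtration u"
    and "ring_automorphism \<sigma>"
    and "compatible u \<sigma> (\<lambda>x. \<sigma> x - x)"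
    and "u (of_nat p) \<ge> 1"
    and "deg_u u (\<lambda>x. \<sigma> x - x) \<ge> 1"
  shows "\<forall>n::nat. deg_u u (\<lambda>x. (\<sigma> ^^ (p ^ n)) x - x) \<ge> ereal (real n)"
proof
  fix n
  have "additive \<sigma>"
    using assms(3) unfolding ring_automorphism_def additive_def by blast
  have "raises u 1 (\<lambda>x. \<sigma> x - x)"
    using assms(6) deg_u_ge_iff_raises[OF assms(2), of "\<lambda>x. \<sigma> x - x" 1]
      additive.zero[OF \<open>additive \<sigma>\<close>] by (simp flip: one_ereal_def)
  then have "raises u (real n + 1) (\<lambda>x. (\<sigma> ^^ (p ^ n)) x - x)"
    by (rule raises_funpow_power_diff[OF assms(2) \<open>additive \<sigma>\<close> _ assms(5)])
  then have "ereal (real n + 1) \<le> deg_u u (\<lambda>x. (\<sigma> ^^ (p ^ n)) x - x)"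
    using deg_u_ge_iff_raises[OF assms(2), of "\<lambda>x. (\<sigma> ^^ (p ^ n)) x - x"]
      additive.zero[OF additive_funpow[OF \<open>additive \<sigma>\<close>]] by simp
  then show "ereal (real n) \<le> deg_u u (\<lambda>x. (\<sigma> ^^ (p ^ n)) x - x)"
    by (rule order_trans[rotated]) simp
qed

end
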